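(* The system below has an equilibrium of the form $G_3=(S^*,I_1^*,0,0,R^* )$ with $S^*,I_1^*,R^*>0$ if and only if $S^{**}>\sigma_1$ (equivalently $K>K^*:=\frac{b\sigma_1}{b-\mu_0}$), and in that case it is unique. Moreover, writing $\hat S_1=S^{**}-\sigma_1$, its components satisfy $$S^*+I_1^*=\sigma_1,\qquad I_1^*=\frac{b}{K\alpha_1}(\hat S_1-R^* )=\frac{(\mu_4'-\mu_0)R^*}{\alpha_1R^*+\rho_1},$$ and $R^*$ is the unique root in $(0,\hat S_1)$ of $$f(R,K)=\Big(\hat S_1-R+\tfrac{K}{b}(\mu_0-\mu_4')\Big)R+\frac{\rho_1}{\alpha_1}(\hat S_1-R)=0.$$
   Context: Consider, for $t\ge0$, the system $S'=\big(b(1-\tfrac{N}{K})-\alpha_1I_1-\alpha_2I_2-(\beta_1+\beta_2+\alpha_3)I_{12}-\mu_0\big)S$, $I_1'=\big(b(1-\tfrac{N}{K})+\alpha_1S-\eta_1I_{12}-\gamma_1I_2-\mu_1\big)I_1+\beta_1SI_{12}$, $I_2'=\big(b(1-\tfrac{N}{K})+\alpha_2S-\eta_2I_{12}-\gamma_2I_1-\mu_2\big)I_2+\beta_2SI_{12}$, $I_{12}'=\big(b(1-\tfrac{N}{K})+\alpha_3S+\eta_1I_1+\eta_2I_2-\mu_3\big)I_{12}+(\gamma_1+\gamma_2)I_1I_2$, $R'=\big(b(1-\tfrac{N}{K})-\mu_4'\big)R+\rho_1I_1+\rho_2I_2+\rho_3I_{12}$, where $N=S+I_1+I_2+I_{12}+R$.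 All parameters $b,K,\alpha_i,\beta_i,\gamma_i,\eta_i,\rho_i,\mu_0,\mu_i'$ are positive and $\mu_i=\rho_i+\mu_i'$ for $i=1,2,3$. Standing assumptions: $b>\mu_0$, $b>\mu_i$ ($i=1,2,3$), $b>\mu_4'$, and $\mu_0<\mu_4'<\mu_j'$ for $j=1,2,3$. Set $\sigma_k=(\mu_k-\mu_0)/\alpha_k$ ($k=1,2,3$), assumed to satisfy $\sigma_1<\sigma_2<\sigma_3$, and $S^{**}=\frac{K}{b}(b-\mu_0)$. *)

theory Defs
  imports Complex_Main
begin

text \<open>Parameters of the co-infection model. The death rates mu_i (i=1,2,3) of the
infected classes are given by mu_i = rho_i + mu_i' (mu_i' = natural/disease death rate).\<close>

record params =
  b :: real  K :: real
  \<alpha>1 :: real  \<alpha>2 :: real  \<alpha>3 :: real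
  \<beta>1 :: real  \<beta>2 :: real
  \<gamma>1 :: real  \<gamma>2 :: real
  \<eta>1 :: real  \<eta>2 :: real
  \<rho>1 :: real  \<rho>2 :: real  \<rho>3 :: real
  \<mu>0 :: real  \<mu>1' :: real  \<mu>2' :: real  \<mu>3' :: real  \<mu>4' :: real

definition \<mu>1 :: "params \<Rightarrow> real" where "\<mu>1 p = \<rho>1 p + \<mu>1' p"
definition \<mu>2 :: "params \<Rightarrow> real" where "\<mu>2 p = \<rho>2 p + \<mu>2' p"
definition \<mu>3 :: "params \<Rightarrow> real" where "\<mu>3 p = \<rho>3 p + \<mu>3' p"

definition \<sigma>1 :: "params \<Rightarrow> real" where "\<sigma>1 p = (\<mu>1 p - \<mu>0 p) / \<alpha>1 p"
definition \<sigma>2 :: "params \<Rightarrow> real" where "\<sigma>2 p = (\<mu>2 p - \<mu>0 p) / \<alpha>2 p"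
definition \<sigma>3 :: "params \<Rightarrow> real" where "\<sigma>3 p = (\<mu>3 p - \<mu>0 p) / \<alpha>3 p"

definition Sss :: "params \<Rightarrow> real" where "Sss p = K p / b p * (b p - \<mu>0 p)"

definition field :: "params \<Rightarrow> real \<times> real \<times> real \<times> real \<times> real \<Rightarrow> real \<times> real \<times> real \<times> real \<times> real" where
  "field p x = (case x of (S, I\<^sub>1, I\<^sub>2, I\<^sub>1\<^sub>2, R) \<Rightarrow>
     (let N = S + I\<^sub>1 + I\<^sub>2 + I\<^sub>1\<^sub>2 + R; g = b p * (1 - N / K p) in
      ((g - \<alpha>1 p * I\<^sub>1 - \<alpha>2 p * I\<^sub>2 - (\<beta>1 p + \<beta>2 p + \<alpha>3 p) * I\<^sub>1\<^sub>2 - \<mu>0 p) * S,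
       (g + \<alpha>1 p * S - \<eta>1 p * I\<^sub>1\<^sub>2 - \<gamma>1 p * I\<^sub>2 - \<mu>1 p) * I\<^sub>1 + \<beta>1 p * S * I\<^sub>1\<^sub>2,
       (g + \<alpha>2 p * S - \<eta>2 p * I\<^sub>1\<^sub>2 - \<gamma>2 p * I\<^sub>1 - \<mu>2 p) * I\<^sub>2 + \<beta>2 p * S * I\<^sub>1\<^sub>2,
       (g + \<alpha>3 p * S + \<eta>1 p * I\<^sub>1 + \<eta>2 p * I\<^sub>2 - \<mu>3 p) * I\<^sub>1\<^sub>2 + (\<gamma>1 p + \<gamma>2 p) * I\<^sub>1 * I\<^sub>2,
       (g - \<mu>4' p) * R + \<rho>1 p * I\<^sub>1 + \<rho>2 p * I\<^sub>2 + \<rho>3 p * I\<^sub>1\<^sub>2)))"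

definition equilibrium :: "params \<Rightarrow> real \<times> real \<times> real \<times> real \<times> real \<Rightarrow> bool" where
  "equilibrium p x \<longleftrightarrow> field p x = (0, 0, 0, 0, 0)"

definition G3_eq :: "params \<Rightarrow> real \<Rightarrow> real \<Rightarrow> real \<Rightarrow> bool" where
  "G3_eq p S I R \<longleftrightarrow> S > 0 \<and> I > 0 \<and> R > 0 \<and> equilibrium p (S, I, 0, 0, R)"

definition S1hat :: "params \<Rightarrow> real" where "S1hat p = Sss p - \<sigma>1 p"

definition fR :: "params \<Rightarrow> real \<Rightarrow> real" where
  "fR p R = (S1hat p - R + K p / b p * (\<mu>0 p - \<mu>4' p)) * R + \<rho>1 p / \<alpha>1 p * (S1hat p - R)"

definition standing :: "params \<Rightarrow> bool" where
  "standing p \<longleftrightarrow>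
     b p > 0 \<and> K p > 0 \<and> \<alpha>1 p > 0 \<and> \<alpha>2 p > 0 \<and> \<alpha>3 p > 0 \<and> \<beta>1 p > 0 \<and> \<beta>2 p > 0 \<and>
     \<gamma>1 p > 0 \<and> \<gamma>2 p > 0 \<and> \<eta>1 p > 0 \<and> \<eta>2 p > 0 \<and> \<rho>1 p > 0 \<and> \<rho>2 p > 0 \<and> \<rho>3 p > 0 \<and>
     \<mu>0 p > 0 \<and> \<mu>1' p > 0 \<and> \<mu>2' p > 0 \<and> \<mu>3' p > 0 \<and> \<mu>4' p > 0 \<and>
     b p > \<mu>0 p \<and> b p > \<mu>1 p \<and> b p > \<mu>2 p \<and> b p > \<mu>3 p \<and> b p > \<mu>4' p \<and>
     \<mu>0 p < \<mu>4' p \<and> \<mu>4' p < \<mu>1' p \<and> \<mu>4' p < \<mu>2' p \<and> \<mu>4' p < \<mu>3' p \<and>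
     \<sigma>1 p < \<sigma>2 p \<and> \<sigma>2 p < \<sigma>3 p"

end

theory Submission
  imports Defs
begin

text \<open>At an equilibrium (S, I1, 0, 0, R) with S, I1 > 0 the S- and I1-equations say that the
logistic growth rate g equals alpha1 I1 + mu0 and also mu1 - alpha1 S, which is linear in
(S, I1, R): it forces S + I1 = sigma1 and alpha1 I1 = b/K (S1hat - R). Substituting into the
R-equation leaves the quadratic f(R) = 0, which is positive at R = 0, negative at R = S1hat, has
negative leading coefficient and a negative product of roots; hence it has exactly one positive
root, and that root lies in (0, S1hat). Positivity of S, i.e. I1 < sigma1, comes from
mu4' < mu1'.\<close>

lemma quadratic_pos_root_less:
  fixes a d h R :: real
  assumes "a > 0" "d < 0" "R > 0" "(h - R + d) * R + a * (h - R) = 0"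
  shows "R < h"
proof -
  have "(h - R) * (R + a) = - d * R"
    using assms(4) by (simp add: algebra_simps)
  also have "\<dots> > 0"
    using assms(2,3) by (simp add: mult_neg_pos)
  finally show ?thesis
    using assms(1,3) by (simp add: zero_less_mult_iff)
qed

lemma quadratic_pos_root_unique:
  fixes a d h r R :: real
  assumes "a > 0" "h > 0" "r > 0" "R > 0"
    and r: "(h - r + d) * r + a * (h - r) = 0" and R: "(h - R + d) * R + a * (h - R) = 0"
  shows "r = R"
proof (rule ccontr)
  assume "r \<noteq> R"
  moreover have "(r - R) * (h + d - a - r - R) = 0"
    using r R by (simp add: algebra_simps)
  ultimately have "h + d - a = r + R"
    by simp
  then have "(h - R + d) * R + a * (h - R) = r * R + a * h"
    by (simp add: algebra_simps)
  moreover have "r * R + a * h > 0"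
    using assms(1-4) by (simp add: add_pos_pos)
  ultimately show False
    using R by simp
qed

lemma quadratic_pos_root_exists:
  fixes a d h :: real
  assumes "a > 0" "d < 0" "h > 0"
  shows "\<exists>R. 0 < R \<and> R < h \<and> (h - R + d) * R + a * (h - R) = 0"
proof -
  let ?f = "\<lambda>R. (h - R + d) * R + a * (h - R)"
  have "?f h < 0" "0 < ?f 0"
    using assms by (simp_all add: mult_neg_pos)
  moreover have "continuous_on {0..h} ?f"
    by (intro continuous_intros)
  ultimately obtain R where "0 \<le> R" "R \<le> h" "?f R = 0"
    using IVT2'[of ?f h 0 0] assms(3) by auto
  moreover from this \<open>?f h < 0\<close> \<open>0 < ?f 0\<close> have "R \<noteq> 0" "R \<noteq> h"
    by auto
  ultimately show ?thesis
    by (intro exI[of _ R]) auto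
qed

lemma fR_coefficient_signs:
  assumes "standing p"
  shows "\<rho>1 p / \<alpha>1 p > 0" "K p / b p * (\<mu>0 p - \<mu>4' p) < 0"
  using assms by (auto simp: standing_def mult_pos_neg divide_neg_pos)

lemma fR_root_less:
  assumes "standing p" "R > 0" "fR p R = 0"
  shows "R < S1hat p"
  using quadratic_pos_root_less[OF fR_coefficient_signs[OF assms(1)] assms(2)] assms(3)
  unfolding fR_def .

lemma fR_root_unique:
  assumes "standing p" "r > 0" "R > 0" "fR p r = 0" "fR p R = 0"
  shows "r = R"
proof -
  have "S1hat p > 0"
    using fR_root_less[OF assms(1,3,5)] assms(3) by simp
  then show ?thesis
    using quadratic_pos_root_unique[OF fR_coefficient_signs(1)[OF assms(1)] _ assms(2,3)] assms(4,5)
    unfolding fR_def by blast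
qed

lemma fR_root_exists:
  assumes "standing p" "S1hat p > 0"
  shows "\<exists>R. 0 < R \<and> fR p R = 0"
  using quadratic_pos_root_exists[OF fR_coefficient_signs[OF assms(1)] assms(2)]
  unfolding fR_def by blast

lemma G3_eq_iff_reduced_system:
  assumes "b p \<noteq> 0" "K p \<noteq> 0" "\<alpha>1 p \<noteq> 0"
  shows "G3_eq p S I R \<longleftrightarrow> 0 < S \<and> 0 < I \<and> 0 < R \<and> S + I = \<sigma>1 p
    \<and> \<alpha>1 p * I = b p / K p * (S1hat p - R)
    \<and> I * (\<alpha>1 p * R + \<rho>1 p) = (\<mu>4' p - \<mu>0 p) * R"
proof -
  define g where "g = b p * (1 - (S + I + R) / K p)"
  have g_shift: "g - \<mu>0 p = b p / K p * (S1hat p - R)" if "S + I = \<sigma>1 p"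
  proof -
    have "S + I + R = \<sigma>1 p + R"
      using that by simp
    then show ?thesis
      using assms by (simp add: g_def S1hat_def Sss_def field_simps)
  qed
  have "g - \<alpha>1 p * I - \<mu>0 p = 0 \<and> g + \<alpha>1 p * S - \<mu>1 p = 0
      \<longleftrightarrow> S + I = \<sigma>1 p \<and> \<alpha>1 p * I = g - \<mu>0 p"
  proof -
    have "\<alpha>1 p * (S + I) = \<mu>1 p - \<mu>0 p \<longleftrightarrow> S + I = \<sigma>1 p"
      using assms by (auto simp: \<sigma>1_def field_simps)
    then show ?thesis
      by (auto simp: algebra_simps)
  qed
  then have linear: "S + I = \<sigma>1 p \<and> \<alpha>1 p * I = b p / K p * (S1hat p - R)
      \<longleftrightarrow> g - \<alpha>1 p * I - \<mu>0 p = 0 \<and> g + \<alpha>1 p * S - \<mu>1 p = 0"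
    using g_shift by auto
  have R_equation: "(g - \<mu>4' p) * R + \<rho>1 p * I = 0
      \<longleftrightarrow> I * (\<alpha>1 p * R + \<rho>1 p) = (\<mu>4' p - \<mu>0 p) * R"
    if "g - \<alpha>1 p * I - \<mu>0 p = 0"
  proof -
    have "g = \<alpha>1 p * I + \<mu>0 p"
      using that by simp
    then show ?thesis
      by (auto simp: algebra_simps)
  qed
  have "G3_eq p S I R \<longleftrightarrow> 0 < S \<and> 0 < I \<and> 0 < R
      \<and> g - \<alpha>1 p * I - \<mu>0 p = 0 \<and> g + \<alpha>1 p * S - \<mu>1 p = 0
      \<and> (g - \<mu>4' p) * R + \<rho>1 p * I = 0"
    by (auto simp: G3_eq_def equilibrium_def field_def Let_def g_def)
  with linear R_equation show ?thesis
    by blast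
qed

lemma fR_eq_residual:
  assumes "b p \<noteq> 0" "K p \<noteq> 0" "\<alpha>1 p \<noteq> 0" "\<alpha>1 p * I = b p / K p * (S1hat p - R)"
  shows "fR p R = K p / b p * (I * (\<alpha>1 p * R + \<rho>1 p) - (\<mu>4' p - \<mu>0 p) * R)"
proof -
  have "S1hat p - R = K p / b p * (\<alpha>1 p * I)"
    using assms by (simp add: field_simps)
  then show ?thesis
    using assms(3) by (simp add: fR_def field_simps) (simp add: add_divide_distrib diff_divide_distrib)
qed

lemma G3_eq_iff_root:
  assumes st: "standing p"
  shows "G3_eq p S I R \<longleftrightarrow> 0 < R \<and> fR p R = 0
    \<and> I = b p / (K p * \<alpha>1 p) * (S1hat p - R) \<and> S = \<sigma>1 p - I"
proof -
  from st have pos: "b p > 0" "K p > 0" "\<alpha>1 p > 0" "\<rho>1 p > 0" "\<mu>0 p < \<mu>4' p" "\<mu>4' p < \<mu>1 p"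
    by (auto simp: standing_def \<mu>1_def)
  have I_iff: "\<alpha>1 p * I = b p / K p * (S1hat p - R) \<longleftrightarrow> I = b p / (K p * \<alpha>1 p) * (S1hat p - R)"
    using pos by (auto simp: field_simps)
  have I_bound: "I < \<sigma>1 p"
    if "R > 0" "I * (\<alpha>1 p * R + \<rho>1 p) = (\<mu>4' p - \<mu>0 p) * R"
  proof -
    have "\<alpha>1 p * I * (\<alpha>1 p * R + \<rho>1 p) = (\<mu>4' p - \<mu>0 p) * (\<alpha>1 p * R)"
      using that(2) by (metis mult.assoc mult.commute)
    also have "\<dots> < (\<mu>1 p - \<mu>0 p) * (\<alpha>1 p * R)"
      using pos that(1) by simp
    also have "\<dots> \<le> (\<mu>1 p - \<mu>0 p) * (\<alpha>1 p * R + \<rho>1 p)"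
      using pos by simp
    finally have "\<alpha>1 p * I < \<mu>1 p - \<mu>0 p"
      using pos that(1) by (simp add: add_pos_pos)
    then show ?thesis
      using pos by (simp add: \<sigma>1_def field_simps)
  qed
  show ?thesis
  proof
    assume "G3_eq p S I R"
    then show "0 < R \<and> fR p R = 0 \<and> I = b p / (K p * \<alpha>1 p) * (S1hat p - R) \<and> S = \<sigma>1 p - I"
      using pos G3_eq_iff_reduced_system[of p S I R] fR_eq_residual[of p I R] I_iff by auto
  next
    assume root: "0 < R \<and> fR p R = 0 \<and> I = b p / (K p * \<alpha>1 p) * (S1hat p - R) \<and> S = \<sigma>1 p - I"
    then have linear: "\<alpha>1 p * I = b p / K p * (S1hat p - R)"
      using I_iff by simp
    then have R_eq: "I * (\<alpha>1 p * R + \<rho>1 p) = (\<mu>4' p - \<mu>0 p) * R"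
      using root pos fR_eq_residual[of p I R] by simp
    have "I > 0"
      using root pos fR_root_less[OF st] by simp
    moreover have "S > 0"
      using root I_bound[OF _ R_eq] by simp
    ultimately show "G3_eq p S I R"
      using root linear R_eq pos G3_eq_iff_reduced_system[of p S I R] by simp
  qed
qed

lemma G3_eq_components:
  assumes st: "standing p" and G: "G3_eq p S I R"
  shows "S + I = \<sigma>1 p
    \<and> I = b p / (K p * \<alpha>1 p) * (S1hat p - R)
    \<and> I = (\<mu>4' p - \<mu>0 p) * R / (\<alpha>1 p * R + \<rho>1 p)
    \<and> 0 < R \<and> R < S1hat p \<and> fR p R = 0"
proof -
  from st have pos: "b p > 0" "K p > 0" "\<alpha>1 p > 0" "\<rho>1 p > 0"
    by (simp_all add: standing_def)
  have "I * (\<alpha>1 p * R + \<rho>1 p) = (\<mu>4' p - \<mu>0 p) * R" "\<alpha>1 p * R + \<rho>1 p > 0"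
    using G pos G3_eq_iff_reduced_system[of p S I R] by (auto simp: add_pos_pos)
  then have "I = (\<mu>4' p - \<mu>0 p) * R / (\<alpha>1 p * R + \<rho>1 p)"
    by (simp add: field_simps)
  then show ?thesis
    using G G3_eq_iff_root[OF st] fR_root_less[OF st] by auto
qed

theorem mainTheorem7:
  assumes "standing p"
  shows "((\<exists>S I R. G3_eq p S I R) \<longleftrightarrow> Sss p > \<sigma>1 p)
    \<and> (Sss p > \<sigma>1 p \<longleftrightarrow> K p > b p * \<sigma>1 p / (b p - \<mu>0 p))
    \<and> (Sss p > \<sigma>1 p \<longrightarrow> (\<exists>!x. case x of (S, I, R) \<Rightarrow> G3_eq p S I R))
    \<and> (\<forall>S I R. G3_eq p S I R \<longrightarrow>
          S + I = \<sigma>1 p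
        \<and> I = b p / (K p * \<alpha>1 p) * (S1hat p - R)
        \<and> I = (\<mu>4' p - \<mu>0 p) * R / (\<alpha>1 p * R + \<rho>1 p)
        \<and> 0 < R \<and> R < S1hat p \<and> fR p R = 0
        \<and> (\<forall>r. 0 < r \<and> r < S1hat p \<and> fR p r = 0 \<longrightarrow> r = R))"
proof -
  note components = G3_eq_components[OF assms]
  have existence: "(\<exists>S I R. G3_eq p S I R) \<longleftrightarrow> Sss p > \<sigma>1 p"
    using components fR_root_exists[OF assms] G3_eq_iff_root[OF assms]
    by (force simp: S1hat_def)
  have threshold: "Sss p > \<sigma>1 p \<longleftrightarrow> K p > b p * \<sigma>1 p / (b p - \<mu>0 p)"
    using assms by (simp add: standing_def Sss_def field_simps)
  have unique: "S = S' \<and> I = I' \<and> R = R'" if "G3_eq p S I R" "G3_eq p S' I' R'" for S I R S' I' R'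
    using that G3_eq_iff_root[OF assms] fR_root_unique[OF assms, of R R'] by auto
  have "\<exists>!x. case x of (S, I, R) \<Rightarrow> G3_eq p S I R" if "Sss p > \<sigma>1 p"
    using that existence unique by (auto intro!: ex_ex1I)
  then show ?thesis
    using existence threshold components fR_root_unique[OF assms] by blast
qed

end
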